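(* Let $(E\to M,\rho,\langle\cdot,\cdot\rangle,[\cdot,\cdot])$ be a Courant algebroid, let $\mathcal{G}$ be a generalized metric on $E$ with $V_\pm=\ker(\mathcal{G}\mp 1)$, and let $D$ be a generalized connection on $E$ that is metric, i.e. $D\mathcal{G}=0$. Then for all $a_\pm,b_\pm\in\Gamma(V_\pm)$, \[ \mathrm{Ric}_{\mathrm{SSCV}}(a_\mp,b_\pm)=2\,\mathrm{Ric}_{\mathrm{JV}}(a_\mp,b_\pm)=\mathrm{Ric}^\pm_{\mathrm{GF}}(a_\mp,b_\pm)+\mathrm{Ric}^\mp_{\mathrm{GF}}(b_\pm,a_\mp). \]
   Context: A Courant algebroid $(E\to M,\rho,\langle\cdot,\cdot\rangle,[\cdot,\cdot])$ consists of a vector bundle $E$, a nondegenerate symmetric bilinear form $\langle\cdot,\cdot\rangle$ on $E$, a bundle map $\rho:E\to TM$ and a bilinear bracket on $\Gamma(E)$ satisfying $[a,[b,c]]=[[a,b],c]+[b,[a,c]]$, $\mathcal{L}_{\rho a}\langle b,c\rangle=\langle[a,b],c\rangle+\langle b,[a,c]\rangle$, and $2[a,a]=\rho^*d\langle a,a\rangle$ (identifying $E^*\cong E$ via $\langle\cdot,\cdot\rangle$). A generalized connection is a linear operator $D:\Gamma(E)\to\Gamma(E^*\otimes E)$ with $D(fa)=fDa+\rho^*df\otimes a$ and $\rho^*d\langle a,b\rangle=\langle Da,b\rangle+\langle a,Db\rangle$; write $D_ba:=(Da)(b)$, and regard $Da$ as the endomorphism $b\mapsto D_ba$, with $(Da)^*$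 its adjoint with respect to $\langle\cdot,\cdot\rangle$. The naive curvature is $\mathcal{R}_0(a,b)c:=D_aD_bc-D_bD_ac-D_{[a,b]}c$. A generalized metric is an endomorphism $\mathcal{G}$ of $E$ with $\mathcal{G}^2=1$ and $\mathcal{G}$ self-adjoint for $\langle\cdot,\cdot\rangle$; $V_\pm:=\ker(\mathcal{G}\mp1)$, so $E=V_+\oplus V_-$ orthogonally, and $a_\pm:=\tfrac12(1\pm\mathcal{G})a$. $D$ is metric if $D_a(\Gamma(V_\pm))\subseteq\Gamma(V_\pm)$ for all $a$. For metric $D$, define $\mathrm{Ric}^\pm_{\mathrm{GF}}(a_\mp,b_\pm)$ as the trace of the endomorphism $V_\pm\to V_\pm$, $c_\pm\mapsto \mathcal{R}_0(c_\pm,a_\mp)b_\pm$. Define the tensor $\mathcal{R}_{\mathrm{JV}}$ by $\langle\mathcal{R}_{\mathrm{JV}}(a,b)c,e\rangle:=\tfrac12\big(\langle\mathcal{R}_0(a,b)c,e\rangle+\langle\mathcal{R}_0(c,e)a,b\rangle+\langle(Da)^*b,(Dc)^*e\rangle\big)$, and $\mathrm{Ric}_{\mathrm{JV}}(a,b)$ as the trace of the endomorphism $c\mapsto\mathcal{R}_{\mathrm{JV}}(c,a)b$ of $E$. Finally $\mathrm{Ric}_{\mathrm{SSCV}}(a,b):=\mathrm{Ric}_{\mathrm{JV}}(a,b)-\mathrm{Ric}_{\mathrm{JV}}(\mathcal{G}a,\mathcal{G}b)$. *)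

theory Defs
  imports Complex_Main
begin

text \<open>Algebraic (Serre--Swan) model of a Courant algebroid.
  'r : the commutative real algebra of smooth functions C^\<infinity>(M);
  's : the C^\<infinity>(M)-module of sections \<Gamma>(E), with action sc;
  ip : the pairing \<langle>_,_\<rangle> on sections;
  anc a : the vector field \<rho>(a), acting as a derivation on functions;
  br : the bracket. Elements of \<Gamma>(E^*) are identified with sections via ip.\<close>

definition dual_basis ::
  "('r::comm_ring_1 \<Rightarrow> 's::ab_group_add \<Rightarrow> 's) \<Rightarrow> ('s \<Rightarrow> 's \<Rightarrow> 'r) \<Rightarrow> 's set
    \<Rightarrow> nat \<Rightarrow> (nat \<Rightarrow> 's) \<Rightarrow> (nat \<Rightarrow> 's) \<Rightarrow> bool" where
  "dual_basis sc ip P n e f \<longleftrightarrow>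
     (\<forall>i<n. e i \<in> P \<and> f i \<in> P) \<and> (\<forall>p\<in>P. p = (\<Sum>i<n. sc (ip p (f i)) (e i)))"

definition trace_on ::
  "('r::comm_ring_1 \<Rightarrow> 's::ab_group_add \<Rightarrow> 's) \<Rightarrow> ('s \<Rightarrow> 's \<Rightarrow> 'r) \<Rightarrow> 's set
    \<Rightarrow> ('s \<Rightarrow> 's) \<Rightarrow> 'r" where
  "trace_on sc ip P T =
     (SOME t. \<exists>n e f. dual_basis sc ip P n e f \<and> t = (\<Sum>i<n. ip (T (e i)) (f i)))"

definition courant_algebroid ::
  "('r::{comm_ring_1,real_algebra_1} \<Rightarrow> 's::ab_group_add \<Rightarrow> 's) \<Rightarrow> ('s \<Rightarrow> 's \<Rightarrow> 'r)
    \<Rightarrow> ('s \<Rightarrow> 'r \<Rightarrow> 'r) \<Rightarrow> ('s \<Rightarrow> 's \<Rightarrow> 's) \<Rightarrow> bool" where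
  "courant_algebroid sc ip anc br \<longleftrightarrow>
     module sc \<and>
     \<comment> \<open>pairing: C^\<infinity>-bilinear, symmetric, nondegenerate (E finite rank)\<close>
     (\<forall>a b c. ip (a + b) c = ip a c + ip b c) \<and>
     (\<forall>f a b. ip (sc f a) b = f * ip a b) \<and>
     (\<forall>a b. ip a b = ip b a) \<and>
     (\<exists>n e f. dual_basis sc ip UNIV n e f) \<and>
     \<comment> \<open>anchor: bundle map E \<rightarrow> TM, i.e. C^\<infinity>-linear map into vector fields\<close>
     (\<forall>a b g. anc (a + b) g = anc a g + anc b g) \<and>
     (\<forall>f a g. anc (sc f a) g = f * anc a g) \<and>
     (\<forall>a g h. anc a (g + h) = anc a g + anc a h) \<and>
     (\<forall>a r g. anc a (of_real r * g) = of_real r * anc a g) \<and>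
     (\<forall>a g h. anc a (g * h) = g * anc a h + h * anc a g) \<and>
     \<comment> \<open>bracket: real-bilinear\<close>
     (\<forall>a b c. br (a + b) c = br a c + br b c) \<and>
     (\<forall>a b c. br a (b + c) = br a b + br a c) \<and>
     (\<forall>r a b. br (sc (of_real r) a) b = sc (of_real r) (br a b)) \<and>
     (\<forall>r a b. br a (sc (of_real r) b) = sc (of_real r) (br a b)) \<and>
     \<comment> \<open>Courant algebroid axioms\<close>
     (\<forall>a b c. br a (br b c) = br (br a b) c + br b (br a c)) \<and>
     (\<forall>a b c. anc a (ip b c) = ip (br a b) c + ip b (br a c)) \<and>
     (\<forall>a c. ip (sc 2 (br a a)) c = anc c (ip a a))"

text \<open>Generalized connection; D b a = D_b a.\<close>
definition gen_connection ::
  "('r::{comm_ring_1,real_algebra_1} \<Rightarrow> 's::ab_group_add \<Rightarrow> 's) \<Rightarrow> ('s \<Rightarrow> 's \<Rightarrow> 'r)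
    \<Rightarrow> ('s \<Rightarrow> 'r \<Rightarrow> 'r) \<Rightarrow> ('s \<Rightarrow> 's \<Rightarrow> 's) \<Rightarrow> bool" where
  "gen_connection sc ip anc D \<longleftrightarrow>
     (\<forall>b a a'. D b (a + a') = D b a + D b a') \<and>
     (\<forall>b b' a. D (b + b') a = D b a + D b' a) \<and>
     (\<forall>f b a. D (sc f b) a = sc f (D b a)) \<and>
     (\<forall>b f a. D b (sc f a) = sc f (D b a) + sc (anc b f) a) \<and>
     (\<forall>c a b. anc c (ip a b) = ip (D c a) b + ip a (D c b))"

definition gen_metric ::
  "('r::comm_ring_1 \<Rightarrow> 's::ab_group_add \<Rightarrow> 's) \<Rightarrow> ('s \<Rightarrow> 's \<Rightarrow> 'r) \<Rightarrow> ('s \<Rightarrow> 's) \<Rightarrow> bool" where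
  "gen_metric sc ip G \<longleftrightarrow>
     (\<forall>a b. G (a + b) = G a + G b) \<and> (\<forall>f a. G (sc f a) = sc f (G a)) \<and>
     (\<forall>a. G (G a) = a) \<and> (\<forall>a b. ip (G a) b = ip a (G b))"

definition Vplus :: "('s \<Rightarrow> 's) \<Rightarrow> 's set" where
  "Vplus G = {a. G a = a}"

definition Vminus :: "('s::uminus \<Rightarrow> 's) \<Rightarrow> 's set" where
  "Vminus G = {a. G a = - a}"

definition metric_connection :: "('s::uminus \<Rightarrow> 's) \<Rightarrow> ('s \<Rightarrow> 's \<Rightarrow> 's) \<Rightarrow> bool" where
  "metric_connection G D \<longleftrightarrow>
     (\<forall>a x. x \<in> Vplus G \<longrightarrow> D a x \<in> Vplus G) \<and> (\<forall>a x. x \<in> Vminus G \<longrightarrow> D a x \<in> Vminus G)"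

definition R0 :: "('s::ab_group_add \<Rightarrow> 's \<Rightarrow> 's) \<Rightarrow> ('s \<Rightarrow> 's \<Rightarrow> 's) \<Rightarrow> 's \<Rightarrow> 's \<Rightarrow> 's \<Rightarrow> 's" where
  "R0 br D a b c = D a (D b c) - D b (D a c) - D (br a b) c"

definition adj :: "('s \<Rightarrow> 's \<Rightarrow> 'r) \<Rightarrow> ('s \<Rightarrow> 's) \<Rightarrow> 's \<Rightarrow> 's" where
  "adj ip T x = (THE y. \<forall>z. ip y z = ip x (T z))"

text \<open>The four-form <R_JV(a,b)c, e>; here D a is the endomorphism b \<mapsto> D_b a.\<close>
definition RJV4 ::
  "('s::ab_group_add \<Rightarrow> 's \<Rightarrow> 'r::{comm_ring_1,real_algebra_1}) \<Rightarrow> ('s \<Rightarrow> 's \<Rightarrow> 's)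
    \<Rightarrow> ('s \<Rightarrow> 's \<Rightarrow> 's) \<Rightarrow> 's \<Rightarrow> 's \<Rightarrow> 's \<Rightarrow> 's \<Rightarrow> 'r" where
  "RJV4 ip br D a b c e = of_real (1/2) *
     (ip (R0 br D a b c) e + ip (R0 br D c e a) b
      + ip (adj ip (\<lambda>x. D x a) b) (adj ip (\<lambda>x. D x c) e))"

definition RJV ::
  "('s::ab_group_add \<Rightarrow> 's \<Rightarrow> 'r::{comm_ring_1,real_algebra_1}) \<Rightarrow> ('s \<Rightarrow> 's \<Rightarrow> 's)
    \<Rightarrow> ('s \<Rightarrow> 's \<Rightarrow> 's) \<Rightarrow> 's \<Rightarrow> 's \<Rightarrow> 's \<Rightarrow> 's" where
  "RJV ip br D a b c = (THE x. \<forall>e. ip x e = RJV4 ip br D a b c e)"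

definition Ric_JV ::
  "('r::{comm_ring_1,real_algebra_1} \<Rightarrow> 's::ab_group_add \<Rightarrow> 's) \<Rightarrow> ('s \<Rightarrow> 's \<Rightarrow> 'r)
    \<Rightarrow> ('s \<Rightarrow> 's \<Rightarrow> 's) \<Rightarrow> ('s \<Rightarrow> 's \<Rightarrow> 's) \<Rightarrow> 's \<Rightarrow> 's \<Rightarrow> 'r" where
  "Ric_JV sc ip br D a b = trace_on sc ip UNIV (\<lambda>c. RJV ip br D c a b)"

definition Ric_SSCV ::
  "('r::{comm_ring_1,real_algebra_1} \<Rightarrow> 's::ab_group_add \<Rightarrow> 's) \<Rightarrow> ('s \<Rightarrow> 's \<Rightarrow> 'r)
    \<Rightarrow> ('s \<Rightarrow> 's \<Rightarrow> 's) \<Rightarrow> ('s \<Rightarrow> 's \<Rightarrow> 's) \<Rightarrow> ('s \<Rightarrow> 's) \<Rightarrow> 's \<Rightarrow> 's \<Rightarrow> 'r" where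
  "Ric_SSCV sc ip br D G a b = Ric_JV sc ip br D a b - Ric_JV sc ip br D (G a) (G b)"

text \<open>Ric^\<pm>_GF(a,b) = trace over V_\<pm> of c \<mapsto> R_0(c,a)b; P is V_+ or V_-.\<close>
definition Ric_GF ::
  "('r::comm_ring_1 \<Rightarrow> 's::ab_group_add \<Rightarrow> 's) \<Rightarrow> ('s \<Rightarrow> 's \<Rightarrow> 'r)
    \<Rightarrow> ('s \<Rightarrow> 's \<Rightarrow> 's) \<Rightarrow> ('s \<Rightarrow> 's \<Rightarrow> 's) \<Rightarrow> 's set \<Rightarrow> 's \<Rightarrow> 's \<Rightarrow> 'r" where
  "Ric_GF sc ip br D P a b = trace_on sc ip P (\<lambda>c. R0 br D c a b)"

end

theory Submission
  imports Defs
begin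

text \<open>Take a dual basis adapted to the orthogonal splitting \<open>E = V\<^sub>+ \<oplus> V\<^sub>-\<close>. For
  \<open>a \<in> V\<^sub>-\<close> and \<open>b \<in> V\<^sub>+\<close> the trace defining \<open>Ric\<^sub>J\<^sub>V(a,b)\<close> then splits into a \<open>V\<^sub>+\<close> and a
  \<open>V\<^sub>-\<close> part. Since \<open>D\<close> preserves \<open>V\<^sub>\<plusminus>\<close> and \<open>V\<^sub>+ \<bottom> V\<^sub>-\<close>, only \<open>\<langle>R\<^sub>0(c,a)b,e\<rangle>\<close> survives in
  the \<open>V\<^sub>+\<close> part and only \<open>\<langle>R\<^sub>0(b,e)c,a\<rangle>\<close> in the \<open>V\<^sub>-\<close> part; the latter equals
  \<open>\<langle>R\<^sub>0(e,b)a,c\<rangle>\<close> because \<open>R\<^sub>0\<close> is skew in its last two arguments and the bracket is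
  skew on orthogonal sections. These are the two traces \<open>Ric\<^sup>\<plusminus>\<^sub>G\<^sub>F\<close>. As \<open>Ric\<^sub>J\<^sub>V\<close> is odd
  in each argument, \<open>Ric\<^sub>S\<^sub>S\<^sub>C\<^sub>V(a,b) = Ric\<^sub>J\<^sub>V(a,b) - Ric\<^sub>J\<^sub>V(-a,b) = 2 Ric\<^sub>J\<^sub>V(a,b)\<close>. The case
  \<open>a \<in> V\<^sub>+\<close>, \<open>b \<in> V\<^sub>-\<close> is the same statement for the generalized metric \<open>-G\<close>.\<close>

lemma sum_lessThan_add_nat:
  "(\<Sum>i<n + m. g i) = (\<Sum>i<n. g i) + (\<Sum>i<m. g (n + i))"
  for g :: "nat \<Rightarrow> 'a::comm_monoid_add"
  by (induction m) (simp_all add: add_ac)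

lemma half_mult_2_real_algebra: "of_real (1/2) * 2 = (1::'a::real_algebra_1)"
proof -
  have "(of_real (1/2 * 2) :: 'a) = 1" by simp
  then show ?thesis by (simp only: of_real_mult of_real_numeral)
qed

lemma two_mult_half_real_algebra [simp]: "2 * of_real (1/2) = (1::'a::real_algebra_1)"
proof -
  have "(of_real (2 * (1/2)) :: 'a) = 1" by simp
  then show ?thesis by (simp only: of_real_mult of_real_numeral)
qed

lemma mult_2_cancel_real_algebra:
  fixes x y :: "'a::real_algebra_1"
  assumes "2 * x = 2 * y"
  shows "x = y"
  by (metis assms half_mult_2_real_algebra mult.assoc mult_1)

lemma Vplus_uminus: "Vplus (\<lambda>x. - G x) = Vminus G"
  for G :: "'a::group_add \<Rightarrow> 'a"
  unfolding Vplus_def Vminus_def by (auto simp: minus_equation_iff)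

lemma Vminus_uminus: "Vminus (\<lambda>x. - G x) = Vplus G"
  for G :: "'a::group_add \<Rightarrow> 'a"
  unfolding Vplus_def Vminus_def by (auto simp: minus_equation_iff)


locale symmetric_pairing = module sc
  for sc :: "'r::comm_ring_1 \<Rightarrow> 's::ab_group_add \<Rightarrow> 's" +
  fixes ip :: "'s \<Rightarrow> 's \<Rightarrow> 'r"
  assumes ip_add_left: "ip (a + b) c = ip a c + ip b c"
    and ip_scale_left: "ip (sc f a) b = f * ip a b"
    and ip_commute: "ip a b = ip b a"
begin

lemma ip_add_right: "ip a (b + c) = ip a b + ip a c"
  by (metis ip_add_left ip_commute)

lemma ip_scale_right: "ip a (sc f b) = f * ip a b"
  by (metis ip_scale_left ip_commute)

sublocale ip_left: additive "\<lambda>a. ip a c" for c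
  by unfold_locales (rule ip_add_left)

sublocale ip_right: additive "\<lambda>b. ip a b" for a
  by unfold_locales (rule ip_add_right)

declare ip_add_left [simp] ip_add_right [simp] ip_scale_left [simp] ip_scale_right [simp]
  ip_left.zero [simp] ip_right.zero [simp] ip_left.minus [simp] ip_right.minus [simp]
  ip_left.diff [simp] ip_right.diff [simp]

lemma dual_basis_mem:
  assumes "dual_basis sc ip P n e f" and "i < n"
  shows "e i \<in> P" and "f i \<in> P"
  using assms unfolding dual_basis_def by blast+

lemma dual_basis_expansion:
  assumes "dual_basis sc ip P n e f" and "p \<in> P"
  shows "p = (\<Sum>i<n. sc (ip p (f i)) (e i))"
  using assms unfolding dual_basis_def by blast

lemma dual_basis_swap:
  assumes P: "subspace P" and b: "dual_basis sc ip P n e f"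
  shows "dual_basis sc ip P n f e"
  unfolding dual_basis_def
proof (intro conjI ballI)
  show "\<forall>i<n. f i \<in> P \<and> e i \<in> P"
    using dual_basis_mem[OF b] by blast
  fix p assume p: "p \<in> P"
  define q where "q = (\<Sum>i<n. sc (ip p (e i)) (f i))"
  have qp: "q - p \<in> P"
    unfolding q_def using P p dual_basis_mem[OF b]
    by (intro subspace_diff subspace_sum subspace_scale) auto
  have "ip (q - p) r = 0" if r: "r \<in> P" for r
  proof -
    have "ip q r = (\<Sum>i<n. ip p (e i) * ip (f i) r)"
      by (simp add: q_def ip_left.sum)
    also have "\<dots> = ip p (\<Sum>i<n. sc (ip r (f i)) (e i))"
      by (simp add: ip_right.sum ip_commute mult.commute)
    also have "\<dots> = ip p r"
      using dual_basis_expansion[OF b r, symmetric] by simp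
    finally show ?thesis by simp
  qed
  then have "(\<Sum>i<n. sc (ip (q - p) (f i)) (e i)) = 0"
    using dual_basis_mem(2)[OF b] by simp
  then have "q - p = 0"
    using dual_basis_expansion[OF b qp] by simp
  then show "p = (\<Sum>i<n. sc (ip p (e i)) (f i))"
    by (simp add: q_def)
qed

lemma dual_basis_append:
  assumes b: "dual_basis sc ip P n e f" and b': "dual_basis sc ip Q m e' f'"
    and orth: "\<And>p q. p \<in> P \<Longrightarrow> q \<in> Q \<Longrightarrow> ip p q = 0"
    and split: "\<And>x. \<exists>p\<in>P. \<exists>q\<in>Q. x = p + q"
  shows "dual_basis sc ip UNIV (n + m)
    (\<lambda>i. if i < n then e i else e' (i - n)) (\<lambda>i. if i < n then f i else f' (i - n))"
  unfolding dual_basis_def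
proof (intro conjI allI impI ballI)
  fix x :: 's
  obtain p q where p: "p \<in> P" and q: "q \<in> Q" and x: "x = p + q"
    using split by blast
  have sum_P: "(\<Sum>i<n. sc (ip x (f i)) (e i)) = p"
  proof -
    have "ip q (f i) = 0" if "i < n" for i
      using orth[OF dual_basis_mem(2)[OF b that] q] by (simp add: ip_commute)
    then show ?thesis
      using dual_basis_expansion[OF b p, symmetric] by (simp add: x)
  qed
  have sum_Q: "(\<Sum>i<m. sc (ip x (f' i)) (e' i)) = q"
  proof -
    have "ip p (f' i) = 0" if "i < m" for i
      using orth[OF p dual_basis_mem(2)[OF b' that]] .
    then show ?thesis
      using dual_basis_expansion[OF b' q, symmetric] by (simp add: x)
  qed
  have "(\<Sum>i<n + m. sc (ip x (if i < n then f i else f' (i - n)))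
      (if i < n then e i else e' (i - n)))
    = (\<Sum>i<n. sc (ip x (f i)) (e i)) + (\<Sum>i<m. sc (ip x (f' i)) (e' i))"
    by (simp add: sum_lessThan_add_nat)
  also have "\<dots> = x"
    by (simp only: sum_P sum_Q) (simp add: x)
  finally show "x = (\<Sum>i<n + m. sc (ip x (if i < n then f i else f' (i - n)))
      (if i < n then e i else e' (i - n)))" ..
qed simp_all

lemma dual_basis_project:
  assumes b: "dual_basis sc ip UNIV n e f" and \<pi>: "module_hom sc sc \<pi>"
    and range: "\<And>x. \<pi> x \<in> P" and idem: "\<And>p. p \<in> P \<Longrightarrow> \<pi> p = p"
    and ip_\<pi>: "\<And>p x. p \<in> P \<Longrightarrow> ip p (\<pi> x) = ip p x"
  shows "dual_basis sc ip P n (\<lambda>i. \<pi> (e i)) (\<lambda>i. \<pi> (f i))"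
  unfolding dual_basis_def
proof (intro conjI allI impI ballI)
  fix p assume p: "p \<in> P"
  have "p = \<pi> p"
    using idem[OF p] by simp
  also have "\<dots> = \<pi> (\<Sum>i<n. sc (ip p (f i)) (e i))"
    by (rule arg_cong[OF dual_basis_expansion[OF b UNIV_I]])
  also have "\<dots> = (\<Sum>i<n. sc (ip p (\<pi> (f i))) (\<pi> (e i)))"
    by (simp add: module_hom.sum[OF \<pi>] module_hom.scale[OF \<pi>] ip_\<pi>[OF p])
  finally show "p = (\<Sum>i<n. sc (ip p (\<pi> (f i))) (\<pi> (e i)))" .
qed (use range in blast)+

lemma trace_sum_dual_basis_indep:
  assumes P: "subspace P" and add: "\<And>x y. T (x + y) = T x + T y"
    and scale: "\<And>g x. x \<in> P \<Longrightarrow> T (sc g x) = sc g (T x)"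
    and b: "dual_basis sc ip P n e f" and b': "dual_basis sc ip P m e' f'"
  shows "(\<Sum>j<m. ip (T (e' j)) (f' j)) = (\<Sum>i<n. ip (T (e i)) (f i))"
proof -
  interpret T: additive T by unfold_locales (rule add)
  have "(\<Sum>j<m. ip (T (e' j)) (f' j)) = (\<Sum>j<m. \<Sum>i<n. ip (e' j) (f i) * ip (T (e i)) (f' j))"
  proof (rule sum.cong[OF refl])
    fix j assume "j \<in> {..<m}"
    then have "T (e' j) = T (\<Sum>i<n. sc (ip (e' j) (f i)) (e i))"
      by (intro arg_cong[OF dual_basis_expansion[OF b]] dual_basis_mem(1)[OF b']) simp
    also have "\<dots> = (\<Sum>i<n. sc (ip (e' j) (f i)) (T (e i)))"
      using dual_basis_mem(1)[OF b] by (simp add: T.sum scale)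
    finally show "ip (T (e' j)) (f' j) = (\<Sum>i<n. ip (e' j) (f i) * ip (T (e i)) (f' j))"
      by (simp add: ip_left.sum)
  qed
  also have "\<dots> = (\<Sum>i<n. ip (T (e i)) (\<Sum>j<m. sc (ip (f i) (e' j)) (f' j)))"
    by (subst sum.swap) (simp add: ip_right.sum ip_commute[of "e' _"] mult.commute)
  also have "\<dots> = (\<Sum>i<n. ip (T (e i)) (f i))"
    by (rule sum.cong[OF refl])
      (simp add: dual_basis_expansion[OF dual_basis_swap[OF P b'] dual_basis_mem(2)[OF b], symmetric])
  finally show ?thesis .
qed

lemma trace_on_dual_basis:
  assumes "subspace P" and "\<And>x y. T (x + y) = T x + T y"
    and "\<And>g x. x \<in> P \<Longrightarrow> T (sc g x) = sc g (T x)"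
    and b: "dual_basis sc ip P n e f"
  shows "trace_on sc ip P T = (\<Sum>i<n. ip (T (e i)) (f i))"
  unfolding trace_on_def
proof (rule someI2)
  show "\<exists>n' e' f'. dual_basis sc ip P n' e' f' \<and>
      (\<Sum>i<n. ip (T (e i)) (f i)) = (\<Sum>i<n'. ip (T (e' i)) (f' i))"
    using b by blast
  fix t assume "\<exists>n' e' f'. dual_basis sc ip P n' e' f' \<and> t = (\<Sum>i<n'. ip (T (e' i)) (f' i))"
  then obtain n' e' f' where b': "dual_basis sc ip P n' e' f'"
    and t: "t = (\<Sum>i<n'. ip (T (e' i)) (f' i))"
    by blast
  show "t = (\<Sum>i<n. ip (T (e i)) (f i))"
    unfolding t by (rule trace_sum_dual_basis_indep[OF assms(1-3) b b'])
qed

end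


locale nondegenerate_pairing = symmetric_pairing +
  assumes dual_basis_UNIV_exists: "\<exists>n e f. dual_basis sc ip UNIV n e f"
begin

lemma pairing_eqI:
  assumes "\<And>z. ip x z = ip y z"
  shows "x = y"
proof -
  obtain n e f where b: "dual_basis sc ip UNIV n e f"
    using dual_basis_UNIV_exists by blast
  have "x - y = (\<Sum>i<n. sc (ip (x - y) (f i)) (e i))"
    using dual_basis_expansion[OF b UNIV_I] .
  also have "\<dots> = 0"
    using assms by simp
  finally show ?thesis
    by simp
qed

lemma linear_form_expansion:
  assumes add: "\<And>z z'. L (z + z') = L z + L z'" and scale: "\<And>g z. L (sc g z) = g * L z"
    and b: "dual_basis sc ip UNIV n e f"
  shows "L x = (\<Sum>i<n. ip x (f i) * L (e i))"
proof -
  interpret L: additive L by unfold_locales (rule add)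
  have "L x = L (\<Sum>i<n. sc (ip x (f i)) (e i))"
    by (rule arg_cong[OF dual_basis_expansion[OF b UNIV_I]])
  also have "\<dots> = (\<Sum>i<n. ip x (f i) * L (e i))"
    by (simp add: L.sum scale)
  finally show ?thesis .
qed

lemma ip_THE_representative:
  assumes add: "\<And>z z'. L (z + z') = L z + L z'" and scale: "\<And>g z. L (sc g z) = g * L z"
  shows "ip (THE y. \<forall>z. ip y z = L z) z = L z"
proof -
  obtain n e f where b: "dual_basis sc ip UNIV n e f"
    using dual_basis_UNIV_exists by blast
  define y where "y = (\<Sum>i<n. sc (L (e i)) (f i))"
  have "ip y z = L z" for z
    unfolding linear_form_expansion[OF add scale b, of z]
    by (simp add: y_def ip_left.sum ip_commute[of "f _"] mult.commute)
  then have "\<exists>!y. \<forall>z. ip y z = L z"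
    by (auto intro: pairing_eqI)
  then show ?thesis
    by (rule theI'[THEN spec])
qed

lemma linear_form_eq_zero:
  assumes add: "\<And>z z'. L (z + z') = L z + L z'" and scale: "\<And>g z. L (sc g z) = g * L z"
    and annihilates: "\<And>y. sc (L y) x = 0"
  shows "L x = 0"
proof -
  obtain n e f where b: "dual_basis sc ip UNIV n e f"
    using dual_basis_UNIV_exists by blast
  have "L x = (\<Sum>i<n. ip x (f i) * L (e i))"
    by (rule linear_form_expansion[OF add scale b])
  also have "\<dots> = (\<Sum>i<n. ip (sc (L (e i)) x) (f i))"
    by (simp add: mult.commute)
  also have "\<dots> = 0"
    by (simp add: annihilates)
  finally show ?thesis .
qed

lemma ip_adj:
  assumes "\<And>z z'. T (z + z') = T z + T z'" and "\<And>g z. T (sc g z) = sc g (T z)"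
  shows "ip (adj ip T x) z = ip x (T z)"
  unfolding adj_def by (rule ip_THE_representative) (simp_all add: assms)

end


locale courant =
  fixes sc :: "'r::{comm_ring_1,real_algebra_1} \<Rightarrow> 's::ab_group_add \<Rightarrow> 's"
    and ip :: "'s \<Rightarrow> 's \<Rightarrow> 'r" and anc :: "'s \<Rightarrow> 'r \<Rightarrow> 'r" and br :: "'s \<Rightarrow> 's \<Rightarrow> 's"
  assumes courant_algebroid: "courant_algebroid sc ip anc br"
begin

sublocale nondegenerate_pairing sc ip
  using courant_algebroid[unfolded courant_algebroid_def]
  by (intro nondegenerate_pairing.intro symmetric_pairing.intro symmetric_pairing_axioms.intro
      nondegenerate_pairing_axioms.intro) fast+

lemma anc_add_left [simp]: "anc (a + b) g = anc a g + anc b g"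
  and anc_scale_left [simp]: "anc (sc f a) g = f * anc a g"
  and anc_add_right [simp]: "anc a (g + h) = anc a g + anc a h"
  and anc_mult [simp]: "anc a (g * h) = g * anc a h + h * anc a g"
  and br_add_left [simp]: "br (a + b) c = br a c + br b c"
  and br_add_right [simp]: "br a (b + c) = br a b + br a c"
  and br_Jacobi: "br a (br b c) = br (br a b) c + br b (br a c)"
  and anc_ip_br: "anc a (ip b c) = ip (br a b) c + ip b (br a c)"
  and ip_br_self: "ip (sc 2 (br a a)) c = anc c (ip a a)"
  using courant_algebroid[unfolded courant_algebroid_def] by fast+

sublocale anc_left: additive "\<lambda>a. anc a g" for g
  by unfold_locales simp

sublocale anc_right: additive "anc a" for a
  by unfold_locales simp

sublocale br_left: additive "\<lambda>a. br a b" for b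
  by unfold_locales simp

sublocale br_right: additive "br a" for a
  by unfold_locales simp

declare anc_left.zero [simp] anc_left.minus [simp] anc_left.diff [simp]
  anc_right.zero [simp] anc_right.minus [simp] anc_right.diff [simp]
  br_left.zero [simp] br_left.minus [simp] br_left.diff [simp]
  br_right.zero [simp] br_right.minus [simp] br_right.diff [simp]

lemma anc_one [simp]: "anc a 1 = 0"
  using anc_mult[of a 1 1] by simp

lemma anc_two [simp]: "anc a 2 = 0"
  using anc_add_right[of a 1 1] by simp

text \<open>\<open>grad g\<close> is \<open>\<rho>\<^sup>* dg\<close>.\<close>
definition grad :: "'r \<Rightarrow> 's"
  where "grad g = (THE y. \<forall>z. ip y z = anc z g)"

lemma ip_grad [simp]: "ip (grad g) z = anc z g"
  unfolding grad_def by (rule ip_THE_representative) simp_all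

lemma grad_zero [simp]: "grad 0 = 0"
  by (rule pairing_eqI) simp

lemma grad_mult: "grad (g * h) = sc g (grad h) + sc h (grad g)"
  by (rule pairing_eqI) simp

lemma br_scale_right: "br a (sc f b) = sc f (br a b) + sc (anc a f) b"
  by (rule pairing_eqI)
    (use anc_ip_br[of a "sc f b"] anc_ip_br[of a b] in \<open>simp add: algebra_simps\<close>)

lemma br_add_commute: "br a b + br b a = grad (ip a b)"
proof (rule pairing_eqI)
  fix c
  have self: "2 * ip (br x x) c = anc c (ip x x)" for x
    using ip_br_self[of x c] by simp
  have "2 * ip (br a b + br b a) c = 2 * anc c (ip a b)"
    using self[of "a + b"] self[of a] self[of b] by (simp add: ip_commute[of b a] algebra_simps)
  then have "ip (br a b + br b a) c = anc c (ip a b)"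
    by (rule mult_2_cancel_real_algebra)
  then show "ip (br a b + br b a) c = ip (grad (ip a b)) c"
    by simp
qed

lemma br_scale_left: "br (sc g c) a = sc g (br c a) - sc (anc a g) c + sc (ip c a) (grad g)"
proof -
  have swap: "br y x = grad (ip x y) - br x y" for x y
    using br_add_commute[of x y] by (simp add: algebra_simps)
  have "br (sc g c) a = grad (ip a (sc g c)) - br a (sc g c)"
    by (rule swap)
  also have "\<dots> = sc g (grad (ip a c) - br a c) - sc (anc a g) c + sc (ip a c) (grad g)"
    by (simp add: grad_mult br_scale_right algebra_simps)
  also have "grad (ip a c) - br a c = br c a"
    by (simp flip: br_add_commute)
  finally show ?thesis
    by (simp add: ip_commute)
qed

text \<open>The Jacobi identity for \<open>a\<close>, \<open>c\<close> and \<open>f b\<close> leaves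
  \<open>((\<rho>(a) \<rho>(c) - \<rho>(c) \<rho>(a) - \<rho>[a,c]) f) b = 0\<close> for every section \<open>b\<close>.\<close>
lemma anc_br: "anc (br a b) f = anc a (anc b f) - anc b (anc a f)"
proof -
  define L where "L b = anc a (anc b f) - anc b (anc a f) - anc (br a b) f" for b
  have "L b = 0"
  proof (rule linear_form_eq_zero)
    fix c
    show "sc (L c) b = 0"
      using br_Jacobi[of a c "sc f b"] br_Jacobi[of a c b]
      by (simp add: L_def br_scale_right algebra_simps)
  qed (simp_all add: L_def br_scale_right algebra_simps)
  then show ?thesis
    by (simp add: L_def)
qed

end


locale courant_connection = courant sc ip anc br
  for sc :: "'r::{comm_ring_1,real_algebra_1} \<Rightarrow> 's::ab_group_add \<Rightarrow> 's"
    and ip anc br +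
  fixes D :: "'s \<Rightarrow> 's \<Rightarrow> 's"
  assumes gen_connection: "gen_connection sc ip anc D"
begin

lemma D_add_right [simp]: "D b (a + a') = D b a + D b a'"
  and D_add_left [simp]: "D (b + b') a = D b a + D b' a"
  and D_scale_left [simp]: "D (sc f b) a = sc f (D b a)"
  and D_scale_right: "D b (sc f a) = sc f (D b a) + sc (anc b f) a"
  and anc_ip_D: "anc c (ip a b) = ip (D c a) b + ip a (D c b)"
  using gen_connection[unfolded gen_connection_def] by fast+

sublocale D_left: additive "\<lambda>b. D b a" for a
  by unfold_locales simp

sublocale D_right: additive "D b" for b
  by unfold_locales simp

declare D_left.zero [simp] D_left.minus [simp] D_left.diff [simp]
  D_right.zero [simp] D_right.minus [simp] D_right.diff [simp]

sublocale R0_first: additive "\<lambda>a. R0 br D a b c" for b c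
  by unfold_locales (simp add: R0_def)

sublocale R0_second: additive "\<lambda>b. R0 br D a b c" for a c
  by unfold_locales (simp add: R0_def)

sublocale R0_third: additive "R0 br D a b" for a b
  by unfold_locales (simp add: R0_def)

declare R0_first.add [simp] R0_second.add [simp] R0_third.add [simp]

lemma R0_scale_first: "R0 br D (sc g a) b c = sc g (R0 br D a b c) - sc (ip a b) (D (grad g) c)"
  by (simp add: R0_def br_scale_left D_scale_right algebra_simps)

lemma R0_scale_second: "R0 br D a (sc g b) c = sc g (R0 br D a b c)"
  by (simp add: R0_def br_scale_right D_scale_right algebra_simps)

lemma R0_scale_third: "R0 br D a b (sc g c) = sc g (R0 br D a b c)"
  by (simp add: R0_def D_scale_right anc_br algebra_simps)

lemma ip_R0_skew: "ip (R0 br D a b c) e = - ip c (R0 br D a b e)"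
proof -
  have "ip (R0 br D a b c) e + ip c (R0 br D a b e)
      = anc a (anc b (ip c e)) - anc b (anc a (ip c e)) - anc (br a b) (ip c e)"
    by (simp add: R0_def anc_ip_D algebra_simps)
  also have "\<dots> = 0"
    by (simp add: anc_br)
  finally show ?thesis
    by (simp add: eq_neg_iff_add_eq_0)
qed

lemma R0_swap:
  assumes "ip a b = 0"
  shows "R0 br D a b c = - R0 br D b a c"
proof -
  have "br b a = - br a b"
    using br_add_commute[of a b] assms by (simp add: eq_neg_iff_add_eq_0 add.commute)
  then show ?thesis
    by (simp add: R0_def)
qed

lemma ip_adj_D: "ip (adj ip (\<lambda>x. D x c) a) z = ip a (D z c)"
  by (rule ip_adj) simp_all

sublocale adj_D_arg: additive "adj ip (\<lambda>x. D x c)" for c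
  by unfold_locales (rule pairing_eqI, simp add: ip_adj_D)

sublocale adj_D_sec: additive "\<lambda>c. adj ip (\<lambda>x. D x c) a" for a
  by unfold_locales (rule pairing_eqI, simp only: ip_adj_D ip_add_left, simp)

declare adj_D_arg.add [simp]

lemma adj_D_scale_arg: "adj ip (\<lambda>x. D x c) (sc g a) = sc g (adj ip (\<lambda>x. D x c) a)"
  by (rule pairing_eqI) (simp add: ip_adj_D)

lemma adj_D_scale_sec:
  "adj ip (\<lambda>x. D x (sc g c)) a = sc g (adj ip (\<lambda>x. D x c) a) + sc (ip a c) (grad g)"
  by (rule pairing_eqI)
    (simp only: ip_adj_D ip_add_left ip_scale_left ip_grad, simp add: D_scale_right algebra_simps)

sublocale RJV4_first: additive "\<lambda>a. RJV4 ip br D a b c e" for b c e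
  by unfold_locales
    (simp only: RJV4_def R0_first.add R0_third.add adj_D_sec.add ip_add_left ip_add_right,
      simp add: algebra_simps)

sublocale RJV4_second: additive "\<lambda>b. RJV4 ip br D a b c e" for a c e
  by unfold_locales (simp add: RJV4_def algebra_simps)

sublocale RJV4_third: additive "\<lambda>c. RJV4 ip br D a b c e" for a b e
  by unfold_locales
    (simp only: RJV4_def R0_first.add R0_third.add adj_D_sec.add ip_add_left ip_add_right,
      simp add: algebra_simps)

sublocale RJV4_last: additive "RJV4 ip br D a b c" for a b c
  by unfold_locales (simp add: RJV4_def algebra_simps)

lemma RJV4_scale_last: "RJV4 ip br D a b c (sc g e) = g * RJV4 ip br D a b c e"
  by (simp add: RJV4_def R0_scale_second adj_D_scale_arg algebra_simps)

lemma ip_RJV [simp]: "ip (RJV ip br D a b c) e = RJV4 ip br D a b c e"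
  unfolding RJV_def by (rule ip_THE_representative) (simp_all add: RJV4_last.add RJV4_scale_last)

text \<open>The non-tensorial terms of \<open>R\<^sub>0(a,b)c\<close> and of \<open>(Da)\<^sup>*b\<close> cancel.\<close>
lemma RJV4_scale_first: "RJV4 ip br D (sc g a) b c e = g * RJV4 ip br D a b c e"
proof -
  have "ip (grad g) (adj ip (\<lambda>x. D x c) e) = ip e (D (grad g) c)"
    by (subst ip_commute) (rule ip_adj_D)
  then show ?thesis
    using ip_commute[of "D (grad g) c" e] ip_commute[of a b]
    by (simp add: RJV4_def R0_scale_first R0_scale_third adj_D_scale_sec algebra_simps)
qed

lemma RJV_add_first: "RJV ip br D (a + a') b c = RJV ip br D a b c + RJV ip br D a' b c"
  by (rule pairing_eqI) (simp add: RJV4_first.add)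

lemma RJV_scale_first: "RJV ip br D (sc g a) b c = sc g (RJV ip br D a b c)"
  by (rule pairing_eqI) (simp add: RJV4_scale_first)

lemma two_RJV4: "2 * RJV4 ip br D a b c e = ip (R0 br D a b c) e + ip (R0 br D c e a) b
    + ip (adj ip (\<lambda>x. D x a) b) (adj ip (\<lambda>x. D x c) e)"
  by (simp add: RJV4_def mult.assoc[symmetric])

lemma Ric_JV_dual_basis:
  assumes "dual_basis sc ip UNIV n e f"
  shows "Ric_JV sc ip br D a b = (\<Sum>i<n. RJV4 ip br D (e i) a b (f i))"
  unfolding Ric_JV_def
  by (subst trace_on_dual_basis[OF subspace_UNIV _ _ assms])
    (simp_all add: RJV_add_first RJV_scale_first)

lemma Ric_JV_minus_left: "Ric_JV sc ip br D (- a) b = - Ric_JV sc ip br D a b"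
proof -
  obtain n e f where "dual_basis sc ip UNIV n e f"
    using dual_basis_UNIV_exists by blast
  then show ?thesis
    by (simp add: Ric_JV_dual_basis RJV4_second.minus sum_negf)
qed

lemma Ric_JV_minus_right: "Ric_JV sc ip br D a (- b) = - Ric_JV sc ip br D a b"
proof -
  obtain n e f where "dual_basis sc ip UNIV n e f"
    using dual_basis_UNIV_exists by blast
  then show ?thesis
    by (simp add: Ric_JV_dual_basis RJV4_third.minus sum_negf)
qed

lemma Ric_GF_dual_basis:
  assumes "subspace P" and "dual_basis sc ip P n e f" and "\<And>c. c \<in> P \<Longrightarrow> ip c a = 0"
  shows "Ric_GF sc ip br D P a b = (\<Sum>i<n. ip (R0 br D (e i) a b) (f i))"
  unfolding Ric_GF_def
  by (rule trace_on_dual_basis[OF assms(1) _ _ assms(2)]) (simp_all add: R0_scale_first assms(3))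

end


locale courant_metric_connection = courant_connection sc ip anc br D
  for sc :: "'r::{comm_ring_1,real_algebra_1} \<Rightarrow> 's::ab_group_add \<Rightarrow> 's"
    and ip anc br D +
  fixes G :: "'s \<Rightarrow> 's"
  assumes gen_metric: "gen_metric sc ip G"
    and metric_connection: "metric_connection G D"
begin

lemma G_add [simp]: "G (a + b) = G a + G b"
  and G_scale [simp]: "G (sc f a) = sc f (G a)"
  and G_G [simp]: "G (G a) = a"
  and ip_G: "ip (G a) b = ip a (G b)"
  using gen_metric[unfolded gen_metric_def] by fast+

sublocale G: additive G
  by unfold_locales simp

declare G.zero [simp] G.minus [simp] G.diff [simp]

lemma Vplus_iff: "x \<in> Vplus G \<longleftrightarrow> G x = x"
  by (simp add: Vplus_def)

lemma Vminus_iff: "x \<in> Vminus G \<longleftrightarrow> G x = - x"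
  by (simp add: Vminus_def)

lemma subspace_Vplus: "subspace (Vplus G)"
  by (simp add: subspace_def Vplus_iff)

lemma subspace_Vminus: "subspace (Vminus G)"
  by (simp add: subspace_def Vminus_iff)

lemma D_Vplus: "x \<in> Vplus G \<Longrightarrow> D a x \<in> Vplus G"
  using metric_connection unfolding metric_connection_def by blast

lemma ip_Vplus_Vminus:
  assumes "p \<in> Vplus G" and "q \<in> Vminus G"
  shows "ip p q = 0"
proof -
  have "ip p q = - ip p q"
    using ip_G[of p q] assms by (simp add: Vplus_iff Vminus_iff)
  then have "ip p q + ip p q = 0"
    by (simp only: eq_neg_iff_add_eq_0)
  then have "2 * ip p q = 2 * 0"
    by (simp only: mult_2 add_0)
  then show ?thesis
    by (rule mult_2_cancel_real_algebra)
qed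

lemma ip_Vminus_Vplus: "q \<in> Vminus G \<Longrightarrow> p \<in> Vplus G \<Longrightarrow> ip q p = 0"
  using ip_Vplus_Vminus[of p q] by (simp add: ip_commute)

lemma R0_Vplus: "c \<in> Vplus G \<Longrightarrow> R0 br D a b c \<in> Vplus G"
  unfolding R0_def by (intro subspace_diff[OF subspace_Vplus] D_Vplus)

lemma adj_D_Vplus_Vminus: "c \<in> Vplus G \<Longrightarrow> a \<in> Vminus G \<Longrightarrow> adj ip (\<lambda>x. D x c) a = 0"
  by (rule pairing_eqI) (simp add: ip_adj_D ip_Vminus_Vplus D_Vplus)

definition proj_plus :: "'s \<Rightarrow> 's"
  where "proj_plus x = sc (of_real (1/2)) (x + G x)"

definition proj_minus :: "'s \<Rightarrow> 's"
  where "proj_minus x = sc (of_real (1/2)) (x - G x)"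

lemma proj_plus_Vplus: "proj_plus x \<in> Vplus G"
  by (simp add: proj_plus_def Vplus_iff add.commute)

lemma proj_minus_Vminus: "proj_minus x \<in> Vminus G"
  by (simp add: proj_minus_def Vminus_iff scale_right_diff_distrib)

lemma proj_plus_add_proj_minus: "proj_plus x + proj_minus x = x"
proof -
  have "proj_plus x + proj_minus x = sc (of_real (1/2)) (x + x)"
    by (simp add: proj_plus_def proj_minus_def flip: scale_right_distrib)
  also have "x + x = sc 2 x"
    using scale_left_distrib[of 1 1 x] by simp
  finally show ?thesis
    by (simp add: half_mult_2_real_algebra)
qed

lemma module_hom_proj_plus: "module_hom sc sc proj_plus"
  and module_hom_proj_minus: "module_hom sc sc proj_minus"
  by (simp_all add: module_hom_iff module_axioms proj_plus_def proj_minus_def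
      scale_right_distrib scale_right_diff_distrib mult.commute)

lemma ip_proj_plus: "p \<in> Vplus G \<Longrightarrow> ip p (proj_plus z) = ip p z"
  using proj_plus_add_proj_minus[of z] ip_Vplus_Vminus[OF _ proj_minus_Vminus]
  by (metis add.right_neutral ip_add_right)

lemma ip_proj_minus: "p \<in> Vminus G \<Longrightarrow> ip p (proj_minus z) = ip p z"
  using proj_plus_add_proj_minus[of z] ip_Vminus_Vplus[OF _ proj_plus_Vplus]
  by (metis add.left_neutral ip_add_right)

lemma proj_plus_Vplus_id: "p \<in> Vplus G \<Longrightarrow> proj_plus p = p"
  using proj_plus_add_proj_minus[of p] by (simp add: proj_minus_def Vplus_iff)

lemma proj_minus_Vminus_id: "p \<in> Vminus G \<Longrightarrow> proj_minus p = p"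
  using proj_plus_add_proj_minus[of p] by (simp add: proj_plus_def Vminus_iff)

lemma dual_basis_Vplus:
  "dual_basis sc ip UNIV n e f \<Longrightarrow>
    dual_basis sc ip (Vplus G) n (\<lambda>i. proj_plus (e i)) (\<lambda>i. proj_plus (f i))"
  by (rule dual_basis_project[OF _ module_hom_proj_plus proj_plus_Vplus proj_plus_Vplus_id
        ip_proj_plus])

lemma dual_basis_Vminus:
  "dual_basis sc ip UNIV n e f \<Longrightarrow>
    dual_basis sc ip (Vminus G) n (\<lambda>i. proj_minus (e i)) (\<lambda>i. proj_minus (f i))"
  by (rule dual_basis_project[OF _ module_hom_proj_minus proj_minus_Vminus proj_minus_Vminus_id
        ip_proj_minus])

lemma dual_basis_split:
  assumes "dual_basis sc ip UNIV n e f"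
  shows "dual_basis sc ip UNIV (n + n)
    (\<lambda>i. if i < n then proj_plus (e i) else proj_minus (e (i - n)))
    (\<lambda>i. if i < n then proj_plus (f i) else proj_minus (f (i - n)))"
proof (rule dual_basis_append[OF dual_basis_Vplus[OF assms] dual_basis_Vminus[OF assms]
      ip_Vplus_Vminus])
  show "\<exists>p\<in>Vplus G. \<exists>q\<in>Vminus G. x = p + q" for x
    using proj_plus_Vplus proj_minus_Vminus proj_plus_add_proj_minus[of x, symmetric] by blast
qed

lemma two_RJV4_Vplus:
  assumes "a \<in> Vminus G" and "c \<in> Vplus G"
  shows "2 * RJV4 ip br D c a b e = ip (R0 br D c a b) e"
  using ip_Vplus_Vminus[OF R0_Vplus[OF assms(2)] assms(1)] adj_D_Vplus_Vminus[OF assms(2,1)]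
  by (simp add: two_RJV4)

lemma two_RJV4_Vminus:
  assumes "b \<in> Vplus G" and "c \<in> Vminus G" and "e \<in> Vminus G"
  shows "2 * RJV4 ip br D c a b e = ip (R0 br D e b a) c"
proof -
  have "ip (R0 br D b e c) a = ip (R0 br D e b a) c"
    using ip_R0_skew[of b e c a] R0_swap[OF ip_Vplus_Vminus[OF assms(1,3)]]
    by (simp add: ip_commute[of c])
  then show ?thesis
    using ip_Vplus_Vminus[OF R0_Vplus[OF assms(1)] assms(3)] adj_D_Vplus_Vminus[OF assms(1,3)]
    by (simp add: two_RJV4)
qed

lemma Ric_JV_Vminus_Vplus:
  assumes a: "a \<in> Vminus G" and b: "b \<in> Vplus G"
  shows "2 * Ric_JV sc ip br D a b
    = Ric_GF sc ip br D (Vplus G) a b + Ric_GF sc ip br D (Vminus G) b a"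
proof -
  obtain n e f where B: "dual_basis sc ip UNIV n e f"
    using dual_basis_UNIV_exists by blast
  have "2 * Ric_JV sc ip br D a b
      = (\<Sum>i<n. 2 * RJV4 ip br D (proj_plus (e i)) a b (proj_plus (f i)))
        + (\<Sum>i<n. 2 * RJV4 ip br D (proj_minus (e i)) a b (proj_minus (f i)))"
    by (simp add: Ric_JV_dual_basis[OF dual_basis_split[OF B]] sum_lessThan_add_nat
        sum_distrib_left distrib_left)
  also have "\<dots> = (\<Sum>i<n. ip (R0 br D (proj_plus (e i)) a b) (proj_plus (f i)))
        + (\<Sum>i<n. ip (R0 br D (proj_minus (f i)) b a) (proj_minus (e i)))"
    by (simp add: two_RJV4_Vplus[OF a proj_plus_Vplus]
        two_RJV4_Vminus[OF b proj_minus_Vminus proj_minus_Vminus])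
  also have "\<dots> = Ric_GF sc ip br D (Vplus G) a b + Ric_GF sc ip br D (Vminus G) b a"
    using Ric_GF_dual_basis[OF subspace_Vplus dual_basis_Vplus[OF B] ip_Vplus_Vminus[OF _ a]]
      Ric_GF_dual_basis[OF subspace_Vminus
        dual_basis_swap[OF subspace_Vminus dual_basis_Vminus[OF B]] ip_Vminus_Vplus[OF _ b]]
    by simp
  finally show ?thesis .
qed

lemma Ric_SSCV_Vminus_Vplus:
  "a \<in> Vminus G \<Longrightarrow> b \<in> Vplus G \<Longrightarrow> Ric_SSCV sc ip br D G a b = 2 * Ric_JV sc ip br D a b"
  by (simp add: Ric_SSCV_def Vplus_iff Vminus_iff Ric_JV_minus_left)

lemma Ric_SSCV_Vplus_Vminus:
  "a \<in> Vplus G \<Longrightarrow> b \<in> Vminus G \<Longrightarrow> Ric_SSCV sc ip br D G a b = 2 * Ric_JV sc ip br D a b"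
  by (simp add: Ric_SSCV_def Vplus_iff Vminus_iff Ric_JV_minus_right)

lemma courant_metric_connection_uminus: "courant_metric_connection sc ip anc br D (\<lambda>x. - G x)"
proof (rule courant_metric_connection.intro[OF courant_connection_axioms])
  show "courant_metric_connection_axioms sc ip D (\<lambda>x. - G x)"
    using metric_connection
    by unfold_locales
      (auto simp: gen_metric_def metric_connection_def Vplus_uminus Vminus_uminus ip_G)
qed

end

theorem theorem2p4:
  fixes sc :: "'r::{comm_ring_1,real_algebra_1} \<Rightarrow> 's::ab_group_add \<Rightarrow> 's"
    and ip :: "'s \<Rightarrow> 's \<Rightarrow> 'r" and anc :: "'s \<Rightarrow> 'r \<Rightarrow> 'r"
    and br :: "'s \<Rightarrow> 's \<Rightarrow> 's" and G :: "'s \<Rightarrow> 's" and D :: "'s \<Rightarrow> 's \<Rightarrow> 's"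
  assumes "courant_algebroid sc ip anc br"
    and "gen_metric sc ip G"
    and "gen_connection sc ip anc D"
    and "metric_connection G D"
  shows "(\<forall>a\<in>Vminus G. \<forall>b\<in>Vplus G.
            Ric_SSCV sc ip br D G a b = 2 * Ric_JV sc ip br D a b \<and>
            2 * Ric_JV sc ip br D a b
              = Ric_GF sc ip br D (Vplus G) a b + Ric_GF sc ip br D (Vminus G) b a)
       \<and> (\<forall>a\<in>Vplus G. \<forall>b\<in>Vminus G.
            Ric_SSCV sc ip br D G a b = 2 * Ric_JV sc ip br D a b \<and>
            2 * Ric_JV sc ip br D a b
              = Ric_GF sc ip br D (Vminus G) a b + Ric_GF sc ip br D (Vplus G) b a)"
proof -
  interpret courant_metric_connection sc ip anc br D G
    using assms by unfold_locales
  interpret opposite: courant_metric_connection sc ip anc br D "\<lambda>x. - G x"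
    by (rule courant_metric_connection_uminus)
  show ?thesis
    by (simp add: Ric_SSCV_Vminus_Vplus Ric_JV_Vminus_Vplus Ric_SSCV_Vplus_Vminus
        opposite.Ric_JV_Vminus_Vplus Vplus_uminus Vminus_uminus)
qed

end
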